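(* Let $\Sigma=(X,\mathcal{U},\phi)$ be an ordered control system which is monotone (with respect to states and inputs), and let $\mathcal{U}_c\subseteq\mathcal{U}$. Assume: (i) there exists $\rho\in\mathcal{K}_\infty$ such that for all $x_-,x,x_+\in X$ with $x_-\le x\le x_+$ one has $\|x\|_X\le\rho(\|x_-\|_X+\|x_+\|_X)$; (ii) there exist $\eta,\xi\in\mathcal{K}_\infty$ such that for every $x\in X$, every $u\in\mathcal{U}(x)$ and every $\varepsilon>0$ there exist $x_-,x_+\in X$, $u_-\in\mathcal{U}(x_-)\cap\mathcal{U}_c$, $u_+\in\mathcal{U}(x_+)\cap\mathcal{U}_c$ with $x_-\le x\le x_+$, $u_-\le u\le u_+$, $\max(\|u_-\|_{\mathcal{U}},\|u_+\|_{\mathcal{U}})\le\eta(\|u\|_{\mathcal{U}}+\varepsilon)$ and $\max(\|x_-\|_X,\|x_+\|_X)\le\xi(\|x\|_X+\|u\|_{\mathcal{U}}+\varepsilon)$. Then $\Sigma$ is ISS if and only if $\Sigma$ is ISS with respect to inputs in $\mathcal{U}_c$. Moreover, if $\rho$ and $\xi$ are linear, then $\Sigma$ is exp-ISS if and only if $\Sigma$ is exp-ISS with respect to inputs in $\mathcal{U}_c$; and if in addition $\Sigma$ is exp-ISS w.r.t. inputs in $\mathcal{U}_c$ with a linear gain function and $\eta$ is linear, then $\Sigma$ is exp-ISS with a linear gain function.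
   Context: Comparison functions: $\mathcal{K}$ is the set of continuous strictly increasing $\gamma:\mathbb{R}_+\to\mathbb{R}_+$ with $\gamma(0)=0$; $\mathcal{K}_\infty$ the unbounded functions in $\mathcal{K}$; $\mathcal{L}$ the continuous decreasing $\gamma:\mathbb{R}_+\to\mathbb{R}_+$ with $\gamma(t)\to0$; $\mathcal{KL}$ the functions $\beta:\mathbb{R}_+^2\to\mathbb{R}_+$ with $\beta(\cdot,t)\in\mathcal{K}$ for all $t\ge0$ and $\beta(r,\cdot)\in\mathcal{L}$ for all $r>0$. A control system $\Sigma=(X,\mathcal{U},\phi)$ consists of a normed linear space $X$ (state space), a set $U$ of input values (nonempty subset of a normed linear space), a normed linear space $\mathcal{U}$ of functions $\mathbb{R}_+\to U$ closed under time shifts $u\mapsto u(\cdot+\tau)$, nonempty sets $\mathcal{U}(x)\subseteq\mathcal{U}$ of admissible inputs for each $x\in X$, and a map $\phi$ such that for every $x\in X$, $u\in\mathcal{U}(x)$ and $t\ge0$ the state $\phi(t,x,u)\in X$ is defined, $\phi(0,x,u)=x$, $\phi(t,x,u)=\phi(t,x,\tilde u)$ whenever $\tilde u\in\mathcal{U}(x)$ agrees with $u$ on $[0,t]$, and $u(t+\cdot)\in\mathcal{U}(\phi(t,x,u))$ with $\phi(h,\phi(t,x,u),u(t+\cdot))=\phi(t+h,x,u)$ for all $t,h\ge0$. A positive cone in a normed linear space $X$ is a set $K$ with $K\cap(-K)=\{0\}$, $ax\in K$ and $x+y\in K$ for all $a\ge0$, $x,y\in K$; it induces the order $x\le y\iff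 y-x\in K$. The system is ordered if $X$ and $\mathcal{U}$ carry such orders. It is monotone if for all $t\ge0$, all $x_1\le x_2$ in $X$ and all $u_1\in\mathcal{U}(x_1)$, $u_2\in\mathcal{U}(x_2)$ with $u_1\le u_2$ one has $\phi(t,x_1,u_1)\le\phi(t,x_2,u_2)$. For $\mathcal{U}_c\subseteq\mathcal{U}$, $\Sigma$ is ISS with respect to inputs in $\mathcal{U}_c$ if there exist $\beta\in\mathcal{KL}$, $\gamma\in\mathcal{K}$ such that $\|\phi(t,x,u)\|_X\le\beta(\|x\|_X,t)+\gamma(\|u\|_{\mathcal{U}})$ for all $t\ge0$, all $x\in X$ and all $u\in\mathcal{U}(x)\cap\mathcal{U}_c$; ISS means ISS w.r.t. inputs in $\mathcal{U}$. $\Sigma$ is exp-ISS w.r.t. inputs in $\mathcal{U}_c$ if there exist constants $M,a>0$ and $\gamma\in\mathcal{K}_\infty$ with $\|\phi(t,x,u)\|_X\le Me^{-at}\|x\|_X+\gamma(\|u\|_{\mathcal{U}})$ for the same range of $t,x,u$; exp-ISS means exp-ISS w.r.t. inputs in $\mathcal{U}$; "with a linear gain function" means $\gamma$ can be chosen linear. *)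

theory Defs
  imports "HOL-Analysis.Analysis"
begin

definition class_K :: "(real \<Rightarrow> real) \<Rightarrow> bool" where
  "class_K \<gamma> \<longleftrightarrow> continuous_on {0..} \<gamma> \<and> strict_mono_on {0..} \<gamma> \<and> \<gamma> 0 = 0
     \<and> (\<forall>r\<ge>0. \<gamma> r \<ge> 0)"

definition class_Kinf :: "(real \<Rightarrow> real) \<Rightarrow> bool" where
  "class_Kinf \<gamma> \<longleftrightarrow> class_K \<gamma> \<and> (\<forall>M. \<exists>r\<ge>0. \<gamma> r > M)"

definition class_L :: "(real \<Rightarrow> real) \<Rightarrow> bool" where
  "class_L \<gamma> \<longleftrightarrow> continuous_on {0..} \<gamma> \<and> (\<forall>s t. 0 \<le> s \<longrightarrow> s \<le> t \<longrightarrow> \<gamma> t \<le> \<gamma> s)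
     \<and> (\<forall>t\<ge>0. \<gamma> t \<ge> 0) \<and> (\<gamma> \<longlongrightarrow> 0) at_top"

definition class_KL :: "(real \<Rightarrow> real \<Rightarrow> real) \<Rightarrow> bool" where
  "class_KL \<beta> \<longleftrightarrow> (\<forall>t\<ge>0. class_K (\<lambda>r. \<beta> r t)) \<and> (\<forall>r>0. class_L (\<beta> r))"

definition linear_fun :: "(real \<Rightarrow> real) \<Rightarrow> bool" where
  "linear_fun f \<longleftrightarrow> (\<exists>c. \<forall>r\<ge>0. f r = c * r)"

text \<open>Input functions are represented as maps real \<Rightarrow> 'v that vanish on negative times
  (only their restriction to the nonnegative reals carries information).\<close>

definition shift :: "real \<Rightarrow> (real \<Rightarrow> 'v::real_vector) \<Rightarrow> real \<Rightarrow> 'v" where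
  "shift \<tau> u = (\<lambda>s. if 0 \<le> s then u (s + \<tau>) else 0)"

definition input_space ::
  "'v::real_normed_vector set \<Rightarrow> (real \<Rightarrow> 'v) set \<Rightarrow> ((real \<Rightarrow> 'v) \<Rightarrow> real) \<Rightarrow> bool" where
  "input_space Uv Uf nU \<longleftrightarrow>
     Uv \<noteq> {} \<and>
     (\<forall>u\<in>Uf. (\<forall>t\<ge>0. u t \<in> Uv) \<and> (\<forall>t<0. u t = 0)) \<and>
     (\<lambda>t. 0) \<in> Uf \<and>
     (\<forall>u\<in>Uf. \<forall>w\<in>Uf. (\<lambda>t. u t + w t) \<in> Uf) \<and>
     (\<forall>u\<in>Uf. \<forall>c. (\<lambda>t. c *\<^sub>R u t) \<in> Uf) \<and>
     (\<forall>u\<in>Uf. nU u \<ge> 0) \<and>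
     (\<forall>u\<in>Uf. nU u = 0 \<longleftrightarrow> u = (\<lambda>t. 0)) \<and>
     (\<forall>u\<in>Uf. \<forall>c. nU (\<lambda>t. c *\<^sub>R u t) = \<bar>c\<bar> * nU u) \<and>
     (\<forall>u\<in>Uf. \<forall>w\<in>Uf. nU (\<lambda>t. u t + w t) \<le> nU u + nU w) \<and>
     (\<forall>u\<in>Uf. \<forall>\<tau>\<ge>0. shift \<tau> u \<in> Uf)"

definition control_system ::
  "'v::real_normed_vector set \<Rightarrow> (real \<Rightarrow> 'v) set \<Rightarrow> ((real \<Rightarrow> 'v) \<Rightarrow> real)
   \<Rightarrow> ('x::real_normed_vector \<Rightarrow> (real \<Rightarrow> 'v) set)
   \<Rightarrow> (real \<Rightarrow> 'x \<Rightarrow> (real \<Rightarrow> 'v) \<Rightarrow> 'x) \<Rightarrow> bool" where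
  "control_system Uv Uf nU Uadm \<phi> \<longleftrightarrow>
     input_space Uv Uf nU \<and>
     (\<forall>x. Uadm x \<noteq> {} \<and> Uadm x \<subseteq> Uf) \<and>
     (\<forall>x. \<forall>u\<in>Uadm x. \<phi> 0 x u = x) \<and>
     (\<forall>x. \<forall>u\<in>Uadm x. \<forall>u'\<in>Uadm x. \<forall>t\<ge>0.
        (\<forall>s\<in>{0..t}. u s = u' s) \<longrightarrow> \<phi> t x u = \<phi> t x u') \<and>
     (\<forall>x. \<forall>u\<in>Uadm x. \<forall>t\<ge>0. shift t u \<in> Uadm (\<phi> t x u) \<and>
        (\<forall>h\<ge>0. \<phi> h (\<phi> t x u) (shift t u) = \<phi> (t + h) x u))"

definition positive_cone :: "'x::real_vector set \<Rightarrow> bool" where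
  "positive_cone K \<longleftrightarrow> K \<inter> uminus ` K = {0} \<and>
     (\<forall>a\<ge>0. \<forall>x\<in>K. a *\<^sub>R x \<in> K) \<and> (\<forall>x\<in>K. \<forall>y\<in>K. x + y \<in> K)"

definition positive_fun_cone :: "(real \<Rightarrow> 'v::real_vector) set \<Rightarrow> (real \<Rightarrow> 'v) set \<Rightarrow> bool" where
  "positive_fun_cone Uf K \<longleftrightarrow> K \<subseteq> Uf \<and>
     K \<inter> (\<lambda>u t. - u t) ` K = {\<lambda>t. 0} \<and>
     (\<forall>a\<ge>0. \<forall>u\<in>K. (\<lambda>t. a *\<^sub>R u t) \<in> K) \<and> (\<forall>u\<in>K. \<forall>w\<in>K. (\<lambda>t. u t + w t) \<in> K)"

definition cle :: "'x::real_vector set \<Rightarrow> 'x \<Rightarrow> 'x \<Rightarrow> bool" where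
  "cle K x y \<longleftrightarrow> y - x \<in> K"

definition fle :: "(real \<Rightarrow> 'v::real_vector) set \<Rightarrow> (real \<Rightarrow> 'v) \<Rightarrow> (real \<Rightarrow> 'v) \<Rightarrow> bool" where
  "fle K u w \<longleftrightarrow> (\<lambda>t. w t - u t) \<in> K"

definition monotone_system ::
  "'x::real_normed_vector set \<Rightarrow> (real \<Rightarrow> 'v::real_normed_vector) set
   \<Rightarrow> ('x \<Rightarrow> (real \<Rightarrow> 'v) set) \<Rightarrow> (real \<Rightarrow> 'x \<Rightarrow> (real \<Rightarrow> 'v) \<Rightarrow> 'x) \<Rightarrow> bool" where
  "monotone_system KX KU Uadm \<phi> \<longleftrightarrow>
     (\<forall>t\<ge>0. \<forall>x1 x2. \<forall>u1\<in>Uadm x1. \<forall>u2\<in>Uadm x2.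
        cle KX x1 x2 \<longrightarrow> fle KU u1 u2 \<longrightarrow> cle KX (\<phi> t x1 u1) (\<phi> t x2 u2))"

definition ISS_wrt ::
  "((real \<Rightarrow> 'v) \<Rightarrow> real) \<Rightarrow> ('x::real_normed_vector \<Rightarrow> (real \<Rightarrow> 'v) set)
   \<Rightarrow> (real \<Rightarrow> 'x \<Rightarrow> (real \<Rightarrow> 'v) \<Rightarrow> 'x) \<Rightarrow> (real \<Rightarrow> 'v) set \<Rightarrow> bool" where
  "ISS_wrt nU Uadm \<phi> Uc \<longleftrightarrow> (\<exists>\<beta> \<gamma>. class_KL \<beta> \<and> class_K \<gamma> \<and>
     (\<forall>t\<ge>0. \<forall>x. \<forall>u\<in>Uadm x \<inter> Uc. norm (\<phi> t x u) \<le> \<beta> (norm x) t + \<gamma> (nU u)))"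

definition expISS_wrt ::
  "((real \<Rightarrow> 'v) \<Rightarrow> real) \<Rightarrow> ('x::real_normed_vector \<Rightarrow> (real \<Rightarrow> 'v) set)
   \<Rightarrow> (real \<Rightarrow> 'x \<Rightarrow> (real \<Rightarrow> 'v) \<Rightarrow> 'x) \<Rightarrow> (real \<Rightarrow> 'v) set \<Rightarrow> bool" where
  "expISS_wrt nU Uadm \<phi> Uc \<longleftrightarrow> (\<exists>M a \<gamma>. M > 0 \<and> a > 0 \<and> class_Kinf \<gamma> \<and>
     (\<forall>t\<ge>0. \<forall>x. \<forall>u\<in>Uadm x \<inter> Uc.
        norm (\<phi> t x u) \<le> M * exp (- a * t) * norm x + \<gamma> (nU u)))"

definition expISS_lin_wrt ::
  "((real \<Rightarrow> 'v) \<Rightarrow> real) \<Rightarrow> ('x::real_normed_vector \<Rightarrow> (real \<Rightarrow> 'v) set)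
   \<Rightarrow> (real \<Rightarrow> 'x \<Rightarrow> (real \<Rightarrow> 'v) \<Rightarrow> 'x) \<Rightarrow> (real \<Rightarrow> 'v) set \<Rightarrow> bool" where
  "expISS_lin_wrt nU Uadm \<phi> Uc \<longleftrightarrow> (\<exists>M a \<gamma>. M > 0 \<and> a > 0 \<and> class_Kinf \<gamma> \<and> linear_fun \<gamma> \<and>
     (\<forall>t\<ge>0. \<forall>x. \<forall>u\<in>Uadm x \<inter> Uc.
        norm (\<phi> t x u) \<le> M * exp (- a * t) * norm x + \<gamma> (nU u)))"

end

theory Submission
  imports Defs
begin

text \<open>Given a state x and input u, assumption (ii) encloses them between states and inputs
  from the class Uc whose sizes are controlled by those of x and u. Monotonicity carries
  the ordering along the flow, so assumption (i) bounds the trajectory of (x, u) by the two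
  enclosing trajectories, to which the ISS estimate for Uc applies. This yields an estimate
  with gains evaluated at the size of u plus an arbitrary \<open>\<epsilon> > 0\<close>, and continuity of
  the gains removes \<open>\<epsilon>\<close>. When \<open>\<rho>\<close> and \<open>\<xi>\<close> are linear all compositions preserve the
  exponential decay, and with \<open>\<eta>\<close> and the gain also linear the new gain stays linear.\<close>

lemma class_K_nonneg: "class_K g \<Longrightarrow> 0 \<le> r \<Longrightarrow> 0 \<le> g r"
  unfolding class_K_def by auto

lemma class_K_mono: "class_K g \<Longrightarrow> 0 \<le> r \<Longrightarrow> r \<le> s \<Longrightarrow> g r \<le> g s"
  unfolding class_K_def strict_mono_on_def by (cases "r = s") (auto intro!: less_imp_le)

lemma class_K_pos: "class_K g \<Longrightarrow> 0 < r \<Longrightarrow> 0 < g r"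
  unfolding class_K_def strict_mono_on_def by (metis atLeast_iff order.refl less_imp_le)

lemma class_K_comp:
  assumes f: "class_K f" and g: "class_K g"
  shows "class_K (\<lambda>r. f (g r))"
proof -
  have "g ` {0..} \<subseteq> {0..}" using g unfolding class_K_def by auto
  then have "continuous_on {0..} (\<lambda>r. f (g r))"
    using continuous_on_compose2[of "{0..}" f "{0..}" g] f g unfolding class_K_def by auto
  moreover have "strict_mono_on {0..} (\<lambda>r. f (g r))"
    using f g unfolding class_K_def strict_mono_on_def by auto
  ultimately show ?thesis using f g unfolding class_K_def by auto
qed

lemma class_K_scale: "(c::real) > 0 \<Longrightarrow> class_K (\<lambda>r. c * r)"
  unfolding class_K_def strict_mono_on_def by (auto intro!: continuous_intros)

lemma class_K_add: "class_K f \<Longrightarrow> class_K g \<Longrightarrow> class_K (\<lambda>r. f r + g r)"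
  unfolding class_K_def strict_mono_on_def by (auto intro!: continuous_intros add_strict_mono)

lemma class_K_add_le:
  assumes g: "class_K g" and "0 \<le> a" "0 \<le> b"
  shows "g (a + b) \<le> g (2 * a) + g (2 * b)"
  using class_K_mono[OF g, of "a + b" "2 * max a b"] class_K_nonneg[OF g, of "2 * a"]
    class_K_nonneg[OF g, of "2 * b"] assms
  by (cases "a \<le> b") (auto simp: max_def)

lemma class_Kinf_imp_class_K: "class_Kinf g \<Longrightarrow> class_K g"
  unfolding class_Kinf_def by auto

lemma class_K_linear_fun_slope:
  assumes "class_K g" "linear_fun g"
  obtains c where "c > 0" "\<forall>r\<ge>0. g r = c * r"
proof -
  obtain c where c: "\<forall>r\<ge>0. g r = c * r" using assms(2) unfolding linear_fun_def by auto
  have "0 < g 1" using class_K_pos[OF assms(1)] by simp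
  with c have "c > 0" by simp
  with c that show ?thesis by blast
qed

lemma class_Kinf_scaled_id_plus:
  assumes K: "(K::real) > 0" and h: "class_K h"
  shows "class_Kinf (\<lambda>w. K * (w + h w))"
proof -
  have Kh: "class_K (\<lambda>w. K * (w + h w))"
    using class_K_comp[OF class_K_scale[OF K] class_K_add[OF class_K_scale[of 1] h]] by simp
  have "K * (r + h r) > B" if "r = max 0 (B / K) + 1" for B r
  proof -
    have "B / K < r" using that by simp
    then have "B < K * r" using K by (simp add: field_simps)
    also have "\<dots> \<le> K * (r + h r)" using K class_K_nonneg[OF h] that by simp
    finally show ?thesis .
  qed
  then show ?thesis using Kh unfolding class_Kinf_def
    by (metis add_nonneg_nonneg max.cobounded1 zero_le_one)
qed

lemma class_L_comp:
  assumes f: "class_K f" and g: "class_L g"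
  shows "class_L (\<lambda>t. f (g t))"
proof -
  have "g ` {0..} \<subseteq> {0..}" using g unfolding class_L_def by auto
  then have cont: "continuous_on {0..} (\<lambda>r. f (g r))"
    using continuous_on_compose2[of "{0..}" f "{0..}" g] f g
    unfolding class_K_def class_L_def by auto
  have "eventually (\<lambda>t. g t \<in> {0..}) at_top"
    using g eventually_ge_at_top[of "0::real"] unfolding class_L_def
    by (metis (mono_tags, lifting) atLeast_iff eventually_mono)
  then have "((\<lambda>t. f (g t)) \<longlongrightarrow> f 0) at_top"
    using continuous_on_tendsto_compose[of "{0..}" f g 0 at_top] f g
    unfolding class_K_def class_L_def by auto
  then show ?thesis
    using cont g class_K_mono[OF f] class_K_nonneg[OF f] f
    unfolding class_L_def class_K_def by auto
qed

lemma class_KL_comp: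
  assumes \<beta>: "class_KL \<beta>" and f: "class_K f" and g: "class_K g"
  shows "class_KL (\<lambda>r t. f (\<beta> (g r) t))"
  unfolding class_KL_def
proof (intro conjI allI impI)
  show "class_K (\<lambda>r. f (\<beta> (g r) t))" if "t \<ge> 0" for t
    using \<beta> that class_K_comp[OF f class_K_comp[OF _ g]] unfolding class_KL_def by blast
  show "class_L (\<lambda>t. f (\<beta> (g r) t))" if "r > 0" for r
    using \<beta> class_K_pos[OF g that] class_L_comp[OF f] unfolding class_KL_def by blast
qed

lemma class_KL_le_at_0:
  assumes \<beta>: "class_KL \<beta>" and "r \<ge> 0" "t \<ge> 0"
  shows "\<beta> r t \<le> \<beta> r 0"
proof (cases "r = 0")
  case True
  then show ?thesis using \<beta> assms unfolding class_KL_def class_K_def by auto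
next
  case False
  then have "class_L (\<beta> r)" using \<beta> assms unfolding class_KL_def by auto
  then show ?thesis using assms unfolding class_L_def by auto
qed

lemma ISS_gain_split:
  assumes \<rho>: "class_K \<rho>" and \<xi>: "class_K \<xi>" and \<eta>: "class_K \<eta>" and \<gamma>: "class_K \<gamma>"
    and \<beta>: "class_KL \<beta>" and s: "s \<ge> 0" and w: "w \<ge> 0" and t: "t \<ge> 0"
  shows "\<rho> (2 * (\<beta> (\<xi> (s + w)) t + \<gamma> (\<eta> w)))
    \<le> \<rho> (4 * \<beta> (2 * \<xi> (2 * s)) t) + \<rho> (4 * \<beta> (2 * \<xi> (2 * w)) 0 + 4 * \<gamma> (\<eta> w))"
proof -
  have \<beta>t: "class_K (\<lambda>r. \<beta> r t)" using \<beta> t unfolding class_KL_def by auto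
  have \<xi>s: "0 \<le> \<xi> (2 * s)" and \<xi>w: "0 \<le> \<xi> (2 * w)" using class_K_nonneg[OF \<xi>] s w by auto
  have "\<beta> (\<xi> (s + w)) t \<le> \<beta> (\<xi> (2 * s) + \<xi> (2 * w)) t"
    using class_K_mono[OF \<beta>t] class_K_add_le[OF \<xi> s w] class_K_nonneg[OF \<xi>] s w by simp
  also have "\<dots> \<le> \<beta> (2 * \<xi> (2 * s)) t + \<beta> (2 * \<xi> (2 * w)) t"
    using class_K_add_le[OF \<beta>t \<xi>s \<xi>w] .
  also have "\<beta> (2 * \<xi> (2 * w)) t \<le> \<beta> (2 * \<xi> (2 * w)) 0"
    using class_KL_le_at_0[OF \<beta> _ t] \<xi>w by simp
  finally have \<beta>_split: "\<beta> (\<xi> (s + w)) t \<le> \<beta> (2 * \<xi> (2 * s)) t + \<beta> (2 * \<xi> (2 * w)) 0"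
    by simp
  define X where "X = 2 * \<beta> (2 * \<xi> (2 * s)) t"
  define Y where "Y = 2 * \<beta> (2 * \<xi> (2 * w)) 0 + 2 * \<gamma> (\<eta> w)"
  have "X \<ge> 0" unfolding X_def using class_K_nonneg[OF \<beta>t] \<xi>s by simp
  moreover have "Y \<ge> 0" unfolding Y_def
    using class_KL_le_at_0[OF \<beta> _ t] class_K_nonneg[OF \<beta>t] class_K_nonneg[OF \<gamma>]
      class_K_nonneg[OF \<eta> w] \<xi>w
    by (smt (verit, best) mult_nonneg_nonneg)
  moreover have "0 \<le> 2 * (\<beta> (\<xi> (s + w)) t + \<gamma> (\<eta> w))"
    using class_K_nonneg[OF \<beta>t] class_K_nonneg[OF \<xi>] class_K_nonneg[OF \<gamma>]
      class_K_nonneg[OF \<eta> w] s w by simp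
  ultimately have "\<rho> (2 * (\<beta> (\<xi> (s + w)) t + \<gamma> (\<eta> w))) \<le> \<rho> (X + Y)"
    using class_K_mono[OF \<rho>] \<beta>_split unfolding X_def Y_def by simp
  also have "\<dots> \<le> \<rho> (2 * X) + \<rho> (2 * Y)"
    using class_K_add_le[OF \<rho>] \<open>X \<ge> 0\<close> \<open>Y \<ge> 0\<close> by blast
  finally show ?thesis unfolding X_def Y_def by (simp add: algebra_simps)
qed

lemma exp_gain_split:
  fixes c M d E s w g :: real
  assumes "c > 0" "M > 0" "d > 0" "0 < E" "E \<le> 1" "0 \<le> s" "0 \<le> w" "0 \<le> g"
  shows "2 * c * (M * E * (d * (s + w)) + g)
    \<le> 2 * c * (M * d + 1) * E * s + 2 * c * (M * d + 1) * (w + g)"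
proof -
  have "(M * d * w) * E \<le> M * d * w"
    using assms by (intro mult_right_le_one_le) auto
  moreover have "0 \<le> E * s" "0 \<le> M * d * g" using assms by simp_all
  moreover have "M * E * (d * (s + w)) + g = M * d * E * s + (M * d * w) * E + g"
    and "(M * d + 1) * E * s + (M * d + 1) * (w + g)
      = M * d * E * s + E * s + M * d * w + M * d * g + w + g"
    by (simp_all add: algebra_simps)
  ultimately have "M * E * (d * (s + w)) + g \<le> (M * d + 1) * E * s + (M * d + 1) * (w + g)"
    using assms(7,8) by (smt (verit))
  then have "2 * c * (M * E * (d * (s + w)) + g)
      \<le> 2 * c * ((M * d + 1) * E * s + (M * d + 1) * (w + g))"
    using assms(1) by (intro mult_left_mono) auto
  then show ?thesis by (simp add: algebra_simps)
qed

lemma linear_fun_scaled_id_plus_comp: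
  assumes \<eta>: "class_K \<eta>" and "linear_fun \<gamma>" "linear_fun \<eta>"
  shows "linear_fun (\<lambda>w. K * (w + \<gamma> (\<eta> w)))"
proof -
  obtain cg where cg: "\<forall>r\<ge>0. \<gamma> r = cg * r" using assms(2) unfolding linear_fun_def by blast
  obtain ce where ce: "\<forall>r\<ge>0. \<eta> r = ce * r" using assms(3) unfolding linear_fun_def by blast
  have "K * (r + \<gamma> (\<eta> r)) = (K * (1 + cg * ce)) * r" if "r \<ge> 0" for r
    using cg ce class_K_nonneg[OF \<eta> that] that by (simp add: algebra_simps)
  then show ?thesis unfolding linear_fun_def by blast
qed

lemma le_by_continuity_from_right:
  fixes f :: "real \<Rightarrow> real"
  assumes f: "continuous_on {0..} f" and v: "v \<ge> 0" and le: "\<And>\<epsilon>. \<epsilon> > 0 \<Longrightarrow> a \<le> f (v + \<epsilon>)"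
  shows "a \<le> f v"
proof (rule tendsto_lowerbound)
  have "eventually (\<lambda>e. v + e \<in> {0..}) (at_right (0::real))"
    using v eventually_at_right_less[of "0::real"] by (auto elim: eventually_mono)
  moreover have "((\<lambda>e. v + e) \<longlongrightarrow> v) (at_right 0)"
    by (auto intro!: tendsto_eq_intros)
  ultimately show "((\<lambda>e. f (v + e)) \<longlongrightarrow> f v) (at_right 0)"
    using continuous_on_tendsto_compose[OF f] v by auto
  show "eventually (\<lambda>e. a \<le> f (v + e)) (at_right (0::real))"
    using le eventually_at_right_less[of "0::real"] by (auto elim: eventually_mono)
qed simp

lemma ISS_wrt_antimono: "A \<subseteq> B \<Longrightarrow> ISS_wrt nU Uadm \<phi> B \<Longrightarrow> ISS_wrt nU Uadm \<phi> A"
  unfolding ISS_wrt_def by blast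

lemma expISS_wrt_antimono: "A \<subseteq> B \<Longrightarrow> expISS_wrt nU Uadm \<phi> B \<Longrightarrow> expISS_wrt nU Uadm \<phi> A"
  unfolding expISS_wrt_def by blast

locale monotone_sandwich =
  fixes nU :: "(real \<Rightarrow> 'v::real_normed_vector) \<Rightarrow> real"
    and Uf :: "(real \<Rightarrow> 'v) set"
    and Uadm :: "'x::real_normed_vector \<Rightarrow> (real \<Rightarrow> 'v) set"
    and \<phi> :: "real \<Rightarrow> 'x \<Rightarrow> (real \<Rightarrow> 'v) \<Rightarrow> 'x"
    and KX :: "'x set" and KU :: "(real \<Rightarrow> 'v) set"
    and Uc :: "(real \<Rightarrow> 'v) set"
    and \<rho> \<eta> \<xi> :: "real \<Rightarrow> real"
  assumes admissible_subset: "Uadm x \<subseteq> Uf"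
    and nU_nonneg: "u \<in> Uf \<Longrightarrow> 0 \<le> nU u"
    and monotone: "monotone_system KX KU Uadm \<phi>"
    and \<rho>: "class_K \<rho>" and \<eta>: "class_K \<eta>" and \<xi>: "class_K \<xi>"
    and norm_between: "\<forall>xm x xp. cle KX xm x \<longrightarrow> cle KX x xp \<longrightarrow> norm x \<le> \<rho> (norm xm + norm xp)"
    and enclosure: "\<forall>x. \<forall>u\<in>Uadm x. \<forall>\<epsilon>>0. \<exists>xm xp um up.
               um \<in> Uadm xm \<inter> Uc \<and> up \<in> Uadm xp \<inter> Uc \<and>
               cle KX xm x \<and> cle KX x xp \<and> fle KU um u \<and> fle KU u up \<and>
               max (nU um) (nU up) \<le> \<eta> (nU u + \<epsilon>) \<and>
               max (norm xm) (norm xp) \<le> \<xi> (norm x + nU u + \<epsilon>)"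
begin

lemma nU_admissible_nonneg: "u \<in> Uadm x \<Longrightarrow> 0 \<le> nU u"
  using admissible_subset nU_nonneg by blast

lemma trajectory_le_of_Uc_bound:
  assumes u: "u \<in> Uadm x" and t: "t \<ge> 0" and \<epsilon>: "\<epsilon> > 0"
    and bound: "\<And>y v. v \<in> Uadm y \<inter> Uc \<Longrightarrow> nU v \<le> \<eta> (nU u + \<epsilon>)
      \<Longrightarrow> norm y \<le> \<xi> (norm x + nU u + \<epsilon>) \<Longrightarrow> norm (\<phi> t y v) \<le> B"
  shows "norm (\<phi> t x u) \<le> \<rho> (2 * B)"
proof -
  obtain xm xp um up where encl: "um \<in> Uadm xm \<inter> Uc" "up \<in> Uadm xp \<inter> Uc"
     "cle KX xm x" "cle KX x xp" "fle KU um u" "fle KU u up"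
     "max (nU um) (nU up) \<le> \<eta> (nU u + \<epsilon>)"
     "max (norm xm) (norm xp) \<le> \<xi> (norm x + nU u + \<epsilon>)"
    using enclosure u \<epsilon> by blast
  then have "cle KX (\<phi> t xm um) (\<phi> t x u)" "cle KX (\<phi> t x u) (\<phi> t xp up)"
    using monotone u t unfolding monotone_system_def by blast+
  then have "norm (\<phi> t x u) \<le> \<rho> (norm (\<phi> t xm um) + norm (\<phi> t xp up))"
    using norm_between by blast
  also have "\<dots> \<le> \<rho> (2 * B)"
    using class_K_mono[OF \<rho>] bound[of um xm] bound[of up xp] encl by simp
  finally show ?thesis .
qed

lemma ISS_extends:
  assumes "ISS_wrt nU Uadm \<phi> Uc"
  shows "ISS_wrt nU Uadm \<phi> Uf"
proof -
  obtain \<beta> \<gamma> where \<beta>: "class_KL \<beta>" and \<gamma>: "class_K \<gamma>"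
    and est: "\<forall>t\<ge>0. \<forall>x. \<forall>u\<in>Uadm x \<inter> Uc. norm (\<phi> t x u) \<le> \<beta> (norm x) t + \<gamma> (nU u)"
    using assms unfolding ISS_wrt_def by blast
  have K2: "class_K (\<lambda>r. 2 * r)" and K4: "class_K (\<lambda>r. 4 * r)" by (auto intro: class_K_scale)
  have \<beta>t: "class_K (\<lambda>r. \<beta> r t)" if "t \<ge> 0" for t using \<beta> that unfolding class_KL_def by auto
  define \<beta>' where "\<beta>' r t = \<rho> (4 * \<beta> (2 * \<xi> (2 * r)) t)" for r t
  define \<gamma>' where "\<gamma>' w = \<rho> (4 * \<beta> (2 * \<xi> (2 * w)) 0 + 4 * \<gamma> (\<eta> w))" for w
  have "class_KL \<beta>'"
    using class_KL_comp[OF \<beta> class_K_comp[OF \<rho> K4] class_K_comp[OF K2 class_K_comp[OF \<xi> K2]]]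
    unfolding \<beta>'_def by simp
  moreover have \<gamma>': "class_K \<gamma>'"
    using class_K_comp[OF \<rho> class_K_add[OF class_K_comp[OF K4 class_K_comp[OF \<beta>t
          class_K_comp[OF K2 class_K_comp[OF \<xi> K2]]]] class_K_comp[OF K4 class_K_comp[OF \<gamma> \<eta>]]]]
    unfolding \<gamma>'_def by simp
  moreover have "norm (\<phi> t x u) \<le> \<beta>' (norm x) t + \<gamma>' (nU u)" if u: "u \<in> Uadm x" and t: "t \<ge> 0"
    for x u t
  proof (rule le_by_continuity_from_right[where f = "\<lambda>w. \<beta>' (norm x) t + \<gamma>' w"])
    show "continuous_on {0..} (\<lambda>w. \<beta>' (norm x) t + \<gamma>' w)"
      using \<gamma>' unfolding class_K_def by (auto intro!: continuous_intros)
    show "0 \<le> nU u" using nU_admissible_nonneg[OF u] .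
    fix \<epsilon> :: real assume \<epsilon>: "\<epsilon> > 0"
    let ?w = "nU u + \<epsilon>"
    have "norm (\<phi> t x u) \<le> \<rho> (2 * (\<beta> (\<xi> (norm x + ?w)) t + \<gamma> (\<eta> ?w)))"
    proof (rule trajectory_le_of_Uc_bound[OF u t \<epsilon>])
      fix y v assume v: "v \<in> Uadm y \<inter> Uc" "nU v \<le> \<eta> ?w" "norm y \<le> \<xi> (norm x + nU u + \<epsilon>)"
      have "norm (\<phi> t y v) \<le> \<beta> (norm y) t + \<gamma> (nU v)" using est t v by blast
      also have "\<dots> \<le> \<beta> (\<xi> (norm x + ?w)) t + \<gamma> (\<eta> ?w)"
        using class_K_mono[OF \<beta>t[OF t], of "norm y"] class_K_mono[OF \<gamma>, of "nU v"] v
          nU_admissible_nonneg[of v y]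
        by (simp add: add.assoc add_mono)
      finally show "norm (\<phi> t y v) \<le> \<beta> (\<xi> (norm x + ?w)) t + \<gamma> (\<eta> ?w)" .
    qed
    also have "\<dots> \<le> \<beta>' (norm x) t + \<gamma>' ?w"
      unfolding \<beta>'_def \<gamma>'_def
      using ISS_gain_split[OF \<rho> \<xi> \<eta> \<gamma> \<beta> norm_ge_zero _ t, of ?w]
        nU_admissible_nonneg[OF u] \<epsilon> by simp
    finally show "norm (\<phi> t x u) \<le> \<beta>' (norm x) t + \<gamma>' ?w" .
  qed
  ultimately show ?thesis unfolding ISS_wrt_def using admissible_subset by blast
qed

lemma expISS_bound_extends:
  assumes lin: "linear_fun \<rho>" "linear_fun \<xi>" and M: "M > 0" and a: "a > 0"
    and \<gamma>: "class_K \<gamma>"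
    and est: "\<forall>t\<ge>0. \<forall>x. \<forall>u\<in>Uadm x \<inter> Uc.
      norm (\<phi> t x u) \<le> M * exp (- a * t) * norm x + \<gamma> (nU u)"
  obtains K where "K > 0" and "\<forall>t\<ge>0. \<forall>x. \<forall>u\<in>Uadm x.
      norm (\<phi> t x u) \<le> K * exp (- a * t) * norm x + K * (nU u + \<gamma> (\<eta> (nU u)))"
proof -
  obtain cr where cr: "cr > 0" "\<forall>r\<ge>0. \<rho> r = cr * r"
    using class_K_linear_fun_slope[OF \<rho> lin(1)] by blast
  obtain cx where cx: "cx > 0" "\<forall>r\<ge>0. \<xi> r = cx * r"
    using class_K_linear_fun_slope[OF \<xi> lin(2)] by blast
  define K where "K = 2 * cr * (M * cx + 1)"
  have K: "K > 0" unfolding K_def using cr cx M by (simp add: add_pos_pos)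
  have \<gamma>\<eta>: "class_K (\<lambda>w. \<gamma> (\<eta> w))" using class_K_comp[OF \<gamma> \<eta>] .
  have "norm (\<phi> t x u) \<le> K * exp (- a * t) * norm x + K * (nU u + \<gamma> (\<eta> (nU u)))"
    if u: "u \<in> Uadm x" and t: "t \<ge> 0" for t x u
  proof (rule le_by_continuity_from_right
      [where f = "\<lambda>w. K * exp (- a * t) * norm x + K * (w + \<gamma> (\<eta> w))"])
    show "continuous_on {0..} (\<lambda>w. K * exp (- a * t) * norm x + K * (w + \<gamma> (\<eta> w)))"
      using \<gamma>\<eta> unfolding class_K_def by (auto intro!: continuous_intros)
    show "0 \<le> nU u" using nU_admissible_nonneg[OF u] .
    fix \<epsilon> :: real assume \<epsilon>: "\<epsilon> > 0"
    define E where "E = exp (- a * t)"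
    define s where "s = norm x"
    define w where "w = nU u + \<epsilon>"
    have E: "0 < E" "E \<le> 1" unfolding E_def using a t by auto
    have s: "0 \<le> s" and w: "0 \<le> w"
      unfolding s_def w_def using nU_admissible_nonneg[OF u] \<epsilon> by auto
    have \<gamma>w: "0 \<le> \<gamma> (\<eta> w)" using class_K_nonneg[OF \<gamma>\<eta> w] .
    have "norm (\<phi> t x u) \<le> \<rho> (2 * (M * E * (cx * (s + w)) + \<gamma> (\<eta> w)))"
    proof (rule trajectory_le_of_Uc_bound[OF u t \<epsilon>])
      fix y v assume v: "v \<in> Uadm y \<inter> Uc" "nU v \<le> \<eta> (nU u + \<epsilon>)"
        "norm y \<le> \<xi> (norm x + nU u + \<epsilon>)"
      have "norm y \<le> cx * (s + w)" using v(3) cx(2) s w unfolding s_def w_def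
        by (simp add: add.assoc)
      then have "M * E * norm y \<le> M * E * (cx * (s + w))" using M E by simp
      moreover have "\<gamma> (nU v) \<le> \<gamma> (\<eta> w)"
        using class_K_mono[OF \<gamma>] v nU_admissible_nonneg[of v y] unfolding w_def by simp
      moreover have "norm (\<phi> t y v) \<le> M * E * norm y + \<gamma> (nU v)"
        using est t v unfolding E_def by blast
      ultimately show "norm (\<phi> t y v) \<le> M * E * (cx * (s + w)) + \<gamma> (\<eta> w)" by linarith
    qed
    also have "\<dots> = 2 * cr * (M * E * (cx * (s + w)) + \<gamma> (\<eta> w))"
      using cr(2) M E cx s w \<gamma>w by simp
    also have "\<dots> \<le> K * E * s + K * (w + \<gamma> (\<eta> w))"
      unfolding K_def using exp_gain_split[OF cr(1) M cx(1) E s w \<gamma>w] .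
    finally show "norm (\<phi> t x u)
      \<le> K * exp (- a * t) * norm x + K * (nU u + \<epsilon> + \<gamma> (\<eta> (nU u + \<epsilon>)))"
      unfolding E_def s_def w_def .
  qed
  with K that show ?thesis by blast
qed

lemma expISS_extends:
  assumes lin: "linear_fun \<rho>" "linear_fun \<xi>" and "expISS_wrt nU Uadm \<phi> Uc"
  shows "expISS_wrt nU Uadm \<phi> Uf"
proof -
  obtain M a \<gamma> where M: "M > 0" and a: "a > 0" and \<gamma>: "class_Kinf \<gamma>"
    and est: "\<forall>t\<ge>0. \<forall>x. \<forall>u\<in>Uadm x \<inter> Uc.
      norm (\<phi> t x u) \<le> M * exp (- a * t) * norm x + \<gamma> (nU u)"
    using assms(3) unfolding expISS_wrt_def by blast
  obtain K where K: "K > 0" and "\<forall>t\<ge>0. \<forall>x. \<forall>u\<in>Uadm x.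
      norm (\<phi> t x u) \<le> K * exp (- a * t) * norm x + K * (nU u + \<gamma> (\<eta> (nU u)))"
    using expISS_bound_extends[OF lin M a class_Kinf_imp_class_K[OF \<gamma>] est] by blast
  moreover have "class_Kinf (\<lambda>w. K * (w + \<gamma> (\<eta> w)))"
    using class_Kinf_scaled_id_plus[OF K class_K_comp[OF class_Kinf_imp_class_K[OF \<gamma>] \<eta>]] .
  ultimately show ?thesis unfolding expISS_wrt_def using a by blast
qed

lemma expISS_lin_extends:
  assumes lin: "linear_fun \<rho>" "linear_fun \<xi>" "linear_fun \<eta>" and "expISS_lin_wrt nU Uadm \<phi> Uc"
  shows "expISS_lin_wrt nU Uadm \<phi> Uf"
proof -
  obtain M a \<gamma> where M: "M > 0" and a: "a > 0" and \<gamma>: "class_Kinf \<gamma>" and \<gamma>_lin: "linear_fun \<gamma>"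
    and est: "\<forall>t\<ge>0. \<forall>x. \<forall>u\<in>Uadm x \<inter> Uc.
      norm (\<phi> t x u) \<le> M * exp (- a * t) * norm x + \<gamma> (nU u)"
    using assms(4) unfolding expISS_lin_wrt_def by blast
  obtain K where K: "K > 0" and "\<forall>t\<ge>0. \<forall>x. \<forall>u\<in>Uadm x.
      norm (\<phi> t x u) \<le> K * exp (- a * t) * norm x + K * (nU u + \<gamma> (\<eta> (nU u)))"
    using expISS_bound_extends[OF lin(1,2) M a class_Kinf_imp_class_K[OF \<gamma>] est] by blast
  moreover have "class_Kinf (\<lambda>w. K * (w + \<gamma> (\<eta> w)))"
    using class_Kinf_scaled_id_plus[OF K class_K_comp[OF class_Kinf_imp_class_K[OF \<gamma>] \<eta>]] .
  moreover have "linear_fun (\<lambda>w. K * (w + \<gamma> (\<eta> w)))"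
    using linear_fun_scaled_id_plus_comp[OF \<eta> \<gamma>_lin lin(3)] .
  ultimately show ?thesis unfolding expISS_lin_wrt_def using a by blast
qed

end

theorem mainTheorem2:
  fixes Uv :: "'v::real_normed_vector set"
    and Uf :: "(real \<Rightarrow> 'v) set"
    and nU :: "(real \<Rightarrow> 'v) \<Rightarrow> real"
    and Uadm :: "'x::real_normed_vector \<Rightarrow> (real \<Rightarrow> 'v) set"
    and \<phi> :: "real \<Rightarrow> 'x \<Rightarrow> (real \<Rightarrow> 'v) \<Rightarrow> 'x"
    and KX :: "'x set" and KU :: "(real \<Rightarrow> 'v) set"
    and Uc :: "(real \<Rightarrow> 'v) set"
    and \<rho> \<eta> \<xi> :: "real \<Rightarrow> real"
  assumes sys: "control_system Uv Uf nU Uadm \<phi>"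
    and coneX: "positive_cone KX"
    and coneU: "positive_fun_cone Uf KU"
    and mono: "monotone_system KX KU Uadm \<phi>"
    and Uc: "Uc \<subseteq> Uf"
    and rho: "class_Kinf \<rho>"
    and i: "\<forall>xm x xp. cle KX xm x \<longrightarrow> cle KX x xp \<longrightarrow> norm x \<le> \<rho> (norm xm + norm xp)"
    and eta: "class_Kinf \<eta>" and xi: "class_Kinf \<xi>"
    and ii: "\<forall>x. \<forall>u\<in>Uadm x. \<forall>\<epsilon>>0. \<exists>xm xp um up.
               um \<in> Uadm xm \<inter> Uc \<and> up \<in> Uadm xp \<inter> Uc \<and>
               cle KX xm x \<and> cle KX x xp \<and> fle KU um u \<and> fle KU u up \<and>
               max (nU um) (nU up) \<le> \<eta> (nU u + \<epsilon>) \<and>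
               max (norm xm) (norm xp) \<le> \<xi> (norm x + nU u + \<epsilon>)"
  shows "(ISS_wrt nU Uadm \<phi> Uf \<longleftrightarrow> ISS_wrt nU Uadm \<phi> Uc)
    \<and> (linear_fun \<rho> \<and> linear_fun \<xi> \<longrightarrow>
         (expISS_wrt nU Uadm \<phi> Uf \<longleftrightarrow> expISS_wrt nU Uadm \<phi> Uc))
    \<and> (linear_fun \<rho> \<and> linear_fun \<xi> \<and> linear_fun \<eta> \<and> expISS_lin_wrt nU Uadm \<phi> Uc \<longrightarrow>
         expISS_lin_wrt nU Uadm \<phi> Uf)"
proof -
  have "input_space Uv Uf nU" using sys unfolding control_system_def by simp
  then have "0 \<le> nU u" if "u \<in> Uf" for u
    using that unfolding input_space_def by simp
  moreover have "Uadm x \<subseteq> Uf" for x using sys unfolding control_system_def by simp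
  ultimately interpret monotone_sandwich nU Uf Uadm \<phi> KX KU Uc \<rho> \<eta> \<xi>
    using mono i ii class_Kinf_imp_class_K[OF rho] class_Kinf_imp_class_K[OF eta]
      class_Kinf_imp_class_K[OF xi] by unfold_locales
  have "ISS_wrt nU Uadm \<phi> Uf \<longleftrightarrow> ISS_wrt nU Uadm \<phi> Uc"
    using ISS_extends ISS_wrt_antimono[OF Uc] by blast
  moreover have "expISS_wrt nU Uadm \<phi> Uf \<longleftrightarrow> expISS_wrt nU Uadm \<phi> Uc"
    if "linear_fun \<rho>" "linear_fun \<xi>"
    using expISS_extends[OF that] expISS_wrt_antimono[OF Uc] by blast
  ultimately show ?thesis using expISS_lin_extends by blast
qed

end
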